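(* For every mad family $\mathcal A$ on $\omega$, $\omega^{\mathfrak t}$ is relatively countably compact in $\Psi(\mathcal A)^{\mathfrak t}$; consequently $\Psi(\mathcal A)$ is $(\mathfrak t,\omega^* )$-pseudocompact.
   Context: An almost disjoint family is an infinite family $\mathcal A$ of infinite subsets of $\omega$ with pairwise finite intersections; a mad family is a maximal one under inclusion. $\Psi(\mathcal A)=\mathcal A\cup\omega$, where points of $\omega$ are isolated and each $A\in\mathcal A$ has local base $\{\{A\}\cup(A\setminus n):n\in\omega\}$. $\mathfrak t$ is the tower number: the least $\kappa$ such that there is a $\subseteq^*$-decreasing family $\{A_\alpha:\alpha<\kappa\}$ of infinite subsets of $\omega$ with no infinite pseudo-intersection. A subset $Y$ of a space $Z$ is relatively countably compact in $Z$ if every countably infinite subset of $Y$ has an accumulation point in $Z$. $\omega^*$ is the set of free ultrafilters on $\omega$. For $p\in\omega^*$ and a sequence $(B_n)$ of subsets of $X$, $x$ is a $p$-limit of $(B_n)$ if $\{n:V\cap B_n\ne\emptyset\}\in p$ for every neighborhood $V$ of $x$. $X$ is $(\kappa,\omega^* )$-pseudocompact if for every family $\{(V^\alpha_n:n\in\omega):\alpha<\kappa\}$ of sequences of nonempty open subsets of $X$ there is $p\in\omega^*$ such that each $(V^\alpha_n:n\in\omega)$ has a $p$-limit point in $X$. *)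

theory Defs
  imports "HOL-Analysis.Analysis"
begin

definition almost_subset :: "nat set \<Rightarrow> nat set \<Rightarrow> bool" (infix \<open>\<subseteq>\<^sup>*\<close> 50)
  where "A \<subseteq>\<^sup>* B \<longleftrightarrow> finite (A - B)"

definition almost_disjoint_family :: "nat set set \<Rightarrow> bool"
  where "almost_disjoint_family \<A> \<longleftrightarrow>
           infinite \<A> \<and> (\<forall>A\<in>\<A>. infinite A) \<and>
           (\<forall>A\<in>\<A>. \<forall>B\<in>\<A>. A \<noteq> B \<longrightarrow> finite (A \<inter> B))"

definition mad_family :: "nat set set \<Rightarrow> bool"
  where "mad_family \<A> \<longleftrightarrow> almost_disjoint_family \<A> \<and>
           (\<forall>\<B>. almost_disjoint_family \<B> \<and> \<A> \<subseteq> \<B> \<longrightarrow> \<B> = \<A>)"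

text \<open>Points of Psi(A): Inl n for n in omega, Inr A for A in the family.\<close>
definition Psi_space :: "nat set set \<Rightarrow> (nat + nat set) topology"
  where "Psi_space \<A> = topology_generated_by
           ((\<lambda>n. {Inl n}) ` UNIV \<union>
            {insert (Inr A) (Inl ` (A - {..<n})) | A n. A \<in> \<A>})"

definition tower :: "'i rel \<Rightarrow> ('i \<Rightarrow> nat set) \<Rightarrow> bool"
  where "tower r A \<longleftrightarrow> Well_order r \<and> (\<forall>\<alpha>\<in>Field r. infinite (A \<alpha>)) \<and>
           (\<forall>\<alpha> \<beta>. (\<alpha>, \<beta>) \<in> r \<longrightarrow> A \<beta> \<subseteq>\<^sup>* A \<alpha>) \<and>
           \<not> (\<exists>B. infinite B \<and> (\<forall>\<alpha>\<in>Field r. B \<subseteq>\<^sup>* A \<alpha>))"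

text \<open>I has cardinality the tower number t: it carries a tower, and every
  tower (indexed in the same type) has length of cardinality at least |I|.\<close>
definition has_card_tower_number :: "'i set \<Rightarrow> bool"
  where "has_card_tower_number I \<longleftrightarrow>
           (\<exists>r A. tower r A \<and> Field r = I) \<and>
           (\<forall>(r :: 'i rel) A. tower r A \<longrightarrow> (\<exists>f. inj_on f I \<and> f ` I \<subseteq> Field r))"

definition rel_countably_compact :: "'a topology \<Rightarrow> 'a set \<Rightarrow> bool"
  where "rel_countably_compact Z Y \<longleftrightarrow> Y \<subseteq> topspace Z \<and>
           (\<forall>S. S \<subseteq> Y \<and> countable S \<and> infinite S \<longrightarrow> Z derived_set_of S \<noteq> {})"

definition free_ultrafilter :: "nat set set \<Rightarrow> bool"
  where "free_ultrafilter p \<longleftrightarrow> {} \<notin> p \<and> UNIV \<in> p \<and>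
           (\<forall>X Y. X \<in> p \<and> X \<subseteq> Y \<longrightarrow> Y \<in> p) \<and>
           (\<forall>X Y. X \<in> p \<and> Y \<in> p \<longrightarrow> X \<inter> Y \<in> p) \<and>
           (\<forall>X. X \<in> p \<or> - X \<in> p) \<and>
           (\<forall>X. finite X \<longrightarrow> X \<notin> p)"

definition is_p_limit :: "'a topology \<Rightarrow> nat set set \<Rightarrow> (nat \<Rightarrow> 'a set) \<Rightarrow> 'a \<Rightarrow> bool"
  where "is_p_limit X p B x \<longleftrightarrow> x \<in> topspace X \<and>
           (\<forall>V. openin X V \<and> x \<in> V \<longrightarrow> {n. V \<inter> B n \<noteq> {}} \<in> p)"

definition kappa_omega_star_pseudocompact :: "'i set \<Rightarrow> 'a topology \<Rightarrow> bool"
  where "kappa_omega_star_pseudocompact K X \<longleftrightarrow>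
           (\<forall>V :: 'i \<Rightarrow> nat \<Rightarrow> 'a set.
              (\<forall>\<alpha>\<in>K. \<forall>n. openin X (V \<alpha> n) \<and> V \<alpha> n \<noteq> {}) \<longrightarrow>
              (\<exists>p. free_ultrafilter p \<and> (\<forall>\<alpha>\<in>K. \<exists>x. is_p_limit X p (V \<alpha>) x)))"

end

theory Submission
  imports Defs
begin

text \<open>Every sequence in omega has a subsequence converging in Psi(A): either it takes a value
  infinitely often, or, by maximality, its range meets some member of A in an infinite set.
  Using that |T| is the tower number, a transfinite recursion along T produces a
  subset-star decreasing chain of infinite sets N_a on which the a-th sequence converges;
  every proper initial segment of the chain is shorter than a tower, so it has an infinite
  pseudo-intersection to continue from. The chain has the strong finite intersection
  property, hence lies in a free ultrafilter p, and all t sequences p-converge at once.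
  Coordinatewise p-limits give a p-limit in the power, which is an accumulation point of
  any injectively enumerated countable subset of omega^t.\<close>

unbundle cardinal_syntax

section \<open>The space Psi(A)\<close>

lemma topspace_Psi_space: "topspace (Psi_space \<A>) = range Inl \<union> Inr ` \<A>"
  unfolding Psi_space_def topology_generated_by_topspace by blast

lemma openin_Psi_space_Inr:
  assumes "openin (Psi_space \<A>) U" "Inr A \<in> U"
  shows "\<exists>m. insert (Inr A) (Inl ` (A - {..<m})) \<subseteq> U"
proof -
  have "generate_topology_on ((\<lambda>n. {Inl n}) ` UNIV \<union>
            {insert (Inr A) (Inl ` (A - {..<n})) | A n. A \<in> \<A>}) U"
    using assms(1) unfolding Psi_space_def openin_topology_generated_by_iff .
  then show ?thesis using assms(2)
  proof (induction arbitrary: A)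
    case Empty
    then show ?case by simp
  next
    case (Int a b)
    then obtain m1 m2 where "insert (Inr A) (Inl ` (A - {..<m1})) \<subseteq> a"
      "insert (Inr A) (Inl ` (A - {..<m2})) \<subseteq> b" by (meson IntD1 IntD2)
    then have "insert (Inr A) (Inl ` (A - {..<max m1 m2})) \<subseteq> a \<inter> b"
      by (auto simp: image_subset_iff)
    then show ?case by blast
  next
    case (UN K)
    then obtain k where "k \<in> K" "Inr A \<in> k" by auto
    with UN obtain m where "insert (Inr A) (Inl ` (A - {..<m})) \<subseteq> k" by blast
    with \<open>k \<in> K\<close> show ?case by blast
  next
    case (Basis s)
    then show ?case by auto
  qed
qed

lemma mad_family_infinite: "mad_family \<A> \<Longrightarrow> \<forall>A\<in>\<A>. infinite A"
  unfolding mad_family_def almost_disjoint_family_def by (elim conjE)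

lemma openin_Psi_space_meets_Inl:
  assumes "\<forall>A\<in>\<A>. infinite A" "openin (Psi_space \<A>) U" "U \<noteq> {}"
  shows "\<exists>k. Inl k \<in> U"
proof -
  obtain y where y: "y \<in> U" using assms(3) by blast
  then have "y \<in> range Inl \<union> Inr ` \<A>"
    using openin_subset[OF assms(2)] topspace_Psi_space by blast
  then show ?thesis
  proof
    assume "y \<in> range Inl"
    then show ?thesis using y by blast
  next
    assume "y \<in> Inr ` \<A>"
    then obtain A where A: "A \<in> \<A>" "y = Inr A" by blast
    then obtain m where m: "insert (Inr A) (Inl ` (A - {..<m})) \<subseteq> U"
      using openin_Psi_space_Inr[OF assms(2)] y by blast
    have "infinite (A - {..<m})" using assms(1) A(1) by auto
    then obtain k where "k \<in> A - {..<m}" by (metis finite.emptyI ex_in_conv)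
    then show ?thesis using m by blast
  qed
qed

lemma mad_family_meets_infinite:
  assumes "mad_family \<A>" "infinite B"
  shows "\<exists>A\<in>\<A>. infinite (A \<inter> B)"
proof (rule ccontr)
  assume "\<not> ?thesis"
  moreover have "almost_disjoint_family \<A>" using assms(1) unfolding mad_family_def by blast
  ultimately have "almost_disjoint_family (insert B \<A>)"
    using assms(2) unfolding almost_disjoint_family_def by (auto simp: Int_commute)
  then have "B \<in> \<A>" using assms(1) unfolding mad_family_def by blast
  with \<open>\<not> ?thesis\<close> assms(2) show False by auto
qed

lemma mad_family_convergent_subsequence:
  assumes mad: "mad_family \<A>" and "infinite M"
  shows "\<exists>N\<subseteq>M. infinite N \<and> (\<exists>x. limitin (Psi_space \<A>) (Inl \<circ> h) x (inf cofinite (principal N)))"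
proof (cases "\<exists>k. infinite {n\<in>M. h n = k}")
  case True
  then obtain k where k: "infinite {n\<in>M. h n = k}" by blast
  have "limitin (Psi_space \<A>) (Inl \<circ> h) (Inl k) (inf cofinite (principal {n\<in>M. h n = k}))"
    unfolding limitin_def eventually_inf_principal
    by (auto simp: topspace_Psi_space intro: always_eventually)
  moreover have "{n\<in>M. h n = k} \<subseteq> M" by blast
  ultimately show ?thesis using k by blast
next
  case False
  then have fibres: "finite {n\<in>M. h n = k}" for k by blast
  have below: "finite {n\<in>M. h n < m}" for m
  proof -
    have "{n\<in>M. h n < m} = (\<Union>k<m. {n\<in>M. h n = k})" by auto
    then show ?thesis using fibres by simp
  qed
  have "infinite (h ` M)"
  proof
    assume "finite (h ` M)"
    then have "finite (\<Union>k\<in>h ` M. {n\<in>M. h n = k})" using fibres by (rule finite_UN_I)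
    moreover have "M \<subseteq> (\<Union>k\<in>h ` M. {n\<in>M. h n = k})" by auto
    ultimately show False using \<open>infinite M\<close> finite_subset by blast
  qed
  then obtain A where A: "A \<in> \<A>" "infinite (A \<inter> h ` M)"
    using mad_family_meets_infinite[OF mad] by blast
  define N where "N = {n\<in>M. h n \<in> A}"
  have "h ` N = A \<inter> h ` M" unfolding N_def by auto
  then have "infinite N" using A(2) by (metis finite_imageI)
  have "limitin (Psi_space \<A>) (Inl \<circ> h) (Inr A) (inf cofinite (principal N))"
    unfolding limitin_def eventually_inf_principal eventually_cofinite
  proof (intro conjI allI impI)
    show "Inr A \<in> topspace (Psi_space \<A>)" using A(1) by (simp add: topspace_Psi_space)
    fix V assume "openin (Psi_space \<A>) V \<and> Inr A \<in> V"
    then obtain m where "insert (Inr A) (Inl ` (A - {..<m})) \<subseteq> V"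
      using openin_Psi_space_Inr by blast
    then have "{n. \<not> (n \<in> N \<longrightarrow> (Inl \<circ> h) n \<in> V)} \<subseteq> {n\<in>M. h n < m}"
      unfolding N_def by auto
    then show "finite {n. \<not> (n \<in> N \<longrightarrow> (Inl \<circ> h) n \<in> V)}"
      using below finite_subset by blast
  qed
  moreover have "N \<subseteq> M" unfolding N_def by blast
  ultimately show ?thesis using \<open>infinite N\<close> by blast
qed

section \<open>Free ultrafilters on omega\<close>

lemma free_ultrafilter_mono: "free_ultrafilter p \<Longrightarrow> X \<in> p \<Longrightarrow> X \<subseteq> Y \<Longrightarrow> Y \<in> p"
  unfolding free_ultrafilter_def by (elim conjE) blast

lemma free_ultrafilter_Int: "free_ultrafilter p \<Longrightarrow> X \<in> p \<Longrightarrow> Y \<in> p \<Longrightarrow> X \<inter> Y \<in> p"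
  unfolding free_ultrafilter_def by (elim conjE) blast

lemma free_ultrafilter_infinite: "free_ultrafilter p \<Longrightarrow> X \<in> p \<Longrightarrow> infinite X"
  unfolding free_ultrafilter_def by (elim conjE) blast

lemma free_ultrafilter_Compl_finite: "free_ultrafilter p \<Longrightarrow> finite X \<Longrightarrow> - X \<in> p"
  unfolding free_ultrafilter_def by (elim conjE) blast

lemma free_ultrafilter_INT:
  assumes "free_ultrafilter p" "finite J" "\<And>j. j \<in> J \<Longrightarrow> Q j \<in> p"
  shows "(\<Inter>j\<in>J. Q j) \<in> p"
  using assms(2,3)
proof (induction J rule: finite_induct)
  case empty
  then show ?case using assms(1) unfolding free_ultrafilter_def by simp
next
  case (insert j J)
  then show ?case using free_ultrafilter_Int[OF assms(1)] by simp
qed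

definition strong_fip :: "nat set set \<Rightarrow> bool"
  where "strong_fip G \<longleftrightarrow> (\<forall>D. D \<subseteq> G \<longrightarrow> finite D \<longrightarrow> infinite (\<Inter>D))"

lemma strong_fip_insert:
  "strong_fip (insert X G) \<longleftrightarrow>
     strong_fip G \<and> (\<forall>D. D \<subseteq> G \<longrightarrow> finite D \<longrightarrow> infinite (X \<inter> \<Inter>D))"
proof
  assume fip: "strong_fip (insert X G)"
  show "strong_fip G \<and> (\<forall>D. D \<subseteq> G \<longrightarrow> finite D \<longrightarrow> infinite (X \<inter> \<Inter>D))"
  proof (intro conjI allI impI)
    show "strong_fip G" using fip unfolding strong_fip_def by (meson subset_insertI2)
    fix D assume "D \<subseteq> G" "finite D"
    then have "insert X D \<subseteq> insert X G" "finite (insert X D)" by auto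
    then have "infinite (\<Inter>(insert X D))" using fip unfolding strong_fip_def by blast
    then show "infinite (X \<inter> \<Inter>D)" by simp
  qed
next
  assume fip: "strong_fip G \<and> (\<forall>D. D \<subseteq> G \<longrightarrow> finite D \<longrightarrow> infinite (X \<inter> \<Inter>D))"
  show "strong_fip (insert X G)"
    unfolding strong_fip_def
  proof (intro allI impI)
    fix D assume D: "D \<subseteq> insert X G" "finite D"
    then have "D - {X} \<subseteq> G" "finite (D - {X})" by auto
    then have "infinite (X \<inter> \<Inter>(D - {X}))" using fip by blast
    moreover have "X \<inter> \<Inter>(D - {X}) \<subseteq> \<Inter>D" by blast
    ultimately show "infinite (\<Inter>D)" using finite_subset by blast
  qed
qed

lemma strong_fip_Union_chain:
  assumes "C \<noteq> {}" "subset.chain UNIV C" "\<And>G. G \<in> C \<Longrightarrow> strong_fip G"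
  shows "strong_fip (\<Union>C)"
  unfolding strong_fip_def
proof (intro allI impI)
  fix D assume "D \<subseteq> \<Union>C" "finite D"
  then obtain G where "G \<in> C" "D \<subseteq> G"
    using finite_subset_Union_chain[OF _ _ assms(1,2)] by blast
  with \<open>finite D\<close> show "infinite (\<Inter>D)" using assms(3) unfolding strong_fip_def by blast
qed

lemma strong_fip_maximal_extension:
  assumes "strong_fip G"
  obtains M where "G \<subseteq> M" "strong_fip M" "\<And>M'. strong_fip M' \<Longrightarrow> M \<subseteq> M' \<Longrightarrow> M' = M"
proof -
  let ?F = "{M. G \<subseteq> M \<and> strong_fip M}"
  have "\<forall>C\<in>chains ?F. \<exists>U\<in>?F. \<forall>X\<in>C. X \<subseteq> U"
  proof
    fix C assume C: "C \<in> chains ?F"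
    show "\<exists>U\<in>?F. \<forall>X\<in>C. X \<subseteq> U"
    proof (cases "C = {}")
      case True
      then show ?thesis using assms by blast
    next
      case False
      have "C \<subseteq> ?F" "subset.chain UNIV C"
        using C unfolding chains_def chain_subset_alt_def by auto
      then have "strong_fip (\<Union>C)" using strong_fip_Union_chain[OF False] by blast
      moreover have "G \<subseteq> \<Union>C" using False \<open>C \<subseteq> ?F\<close> by blast
      ultimately show ?thesis by blast
    qed
  qed
  from Zorn_Lemma2[OF this] obtain M where M: "M \<in> ?F" and max: "\<forall>X\<in>?F. M \<subseteq> X \<longrightarrow> X = M"
    by blast
  show ?thesis
  proof (rule that)
    show "G \<subseteq> M" "strong_fip M" using M by auto
    fix M' assume "strong_fip M'" "M \<subseteq> M'"
    then show "M' = M" using max M by blast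
  qed
qed

lemma maximal_strong_fip_free_ultrafilter:
  assumes fip: "strong_fip M" and max: "\<And>M'. strong_fip M' \<Longrightarrow> M \<subseteq> M' \<Longrightarrow> M' = M"
  shows "free_ultrafilter M"
proof -
  have inf: "infinite (\<Inter>D)" if "D \<subseteq> M" "finite D" for D
    using fip that unfolding strong_fip_def by blast
  have mem: "X \<in> M" if "\<And>D. D \<subseteq> M \<Longrightarrow> finite D \<Longrightarrow> infinite (X \<inter> \<Inter>D)" for X
  proof -
    have "strong_fip (insert X M)" using fip that by (simp add: strong_fip_insert)
    then have "insert X M = M" using max by blast
    then show ?thesis by blast
  qed
  have fin: "X \<notin> M" if "finite X" for X
    using inf[of "{X}"] that by auto
  have up: "Y \<in> M" if "X \<in> M" "X \<subseteq> Y" for X Y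
  proof (rule mem)
    fix D assume "D \<subseteq> M" "finite D"
    then have "infinite (\<Inter>(insert X D))" using inf[of "insert X D"] that(1) by simp
    moreover have "\<Inter>(insert X D) \<subseteq> Y \<inter> \<Inter>D" using that(2) by blast
    ultimately show "infinite (Y \<inter> \<Inter>D)" using finite_subset by blast
  qed
  have Int: "X \<inter> Y \<in> M" if "X \<in> M" "Y \<in> M" for X Y
  proof (rule mem)
    fix D assume "D \<subseteq> M" "finite D"
    then have "infinite (\<Inter>(insert X (insert Y D)))" using inf[of "insert X (insert Y D)"] that by simp
    then show "infinite (X \<inter> Y \<inter> \<Inter>D)" by (simp add: Int_assoc)
  qed
  have Compl: "X \<in> M \<or> - X \<in> M" for X
  proof (rule ccontr)
    assume "\<not> ?thesis"
    then obtain D1 D2 where D: "D1 \<subseteq> M" "finite D1" "finite (X \<inter> \<Inter>D1)"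
      "D2 \<subseteq> M" "finite D2" "finite (- X \<inter> \<Inter>D2)"
      using mem[of X] mem[of "- X"] by blast
    have "\<Inter>(D1 \<union> D2) \<subseteq> (X \<inter> \<Inter>D1) \<union> (- X \<inter> \<Inter>D2)" by blast
    then have "finite (\<Inter>(D1 \<union> D2))" using D(3,6) finite_subset by blast
    moreover have "infinite (\<Inter>(D1 \<union> D2))" using inf D(1,2,4,5) by simp
    ultimately show False by blast
  qed
  have "UNIV \<in> M" by (rule mem) (simp add: inf)
  moreover have "{} \<notin> M" using fin by blast
  ultimately show ?thesis
    unfolding free_ultrafilter_def using up Int Compl fin by blast
qed

lemma strong_fip_free_ultrafilter:
  assumes "strong_fip G"
  obtains p where "free_ultrafilter p" "G \<subseteq> p"
  using strong_fip_maximal_extension[OF assms] maximal_strong_fip_free_ultrafilter by metis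

section \<open>Chains below the tower number\<close>

lemma almost_subset_refl: "A \<subseteq>\<^sup>* A"
  unfolding almost_subset_def by simp

lemma subset_imp_almost_subset: "A \<subseteq> B \<Longrightarrow> A \<subseteq>\<^sup>* B"
  unfolding almost_subset_def by (metis Diff_eq_empty_iff finite.emptyI)

lemma almost_subset_trans: "A \<subseteq>\<^sup>* B \<Longrightarrow> B \<subseteq>\<^sup>* C \<Longrightarrow> A \<subseteq>\<^sup>* C"
  unfolding almost_subset_def
  by (rule finite_subset[of _ "(A - B) \<union> (B - C)"]) auto

text \<open>A proper initial segment of the initial well-order on T has cardinality below
  the tower number, so a decreasing sequence along it is not a tower.\<close>
lemma has_card_tower_number_pseudo_intersection:
  assumes tn: "has_card_tower_number T" and "a \<in> T"
    and N: "\<forall>b\<in>underS |T| a. infinite (N b) \<and> (\<forall>c\<in>underS |T| b. N b \<subseteq>\<^sup>* N c)"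
  shows "\<exists>M. infinite M \<and> (\<forall>b\<in>underS |T| a. M \<subseteq>\<^sup>* N b)"
proof (rule ccontr)
  assume no_pseudo_intersection: "\<not> ?thesis"
  let ?U = "underS |T| a"
  let ?r = "Restr |T| ?U"
  have WO: "Well_order |T|" by (rule card_of_Well_order)
  have Field_r: "Field ?r = ?U"
    by (rule Refl_Field_Restr2)
      (use WO Order_Relation.underS_Field[of "|T|" a] in \<open>auto simp: order_on_defs\<close>)
  have "tower ?r N"
    unfolding tower_def
  proof (intro conjI)
    show "Well_order ?r" using WO by (rule Well_order_Restr)
    show "\<forall>\<alpha>\<in>Field ?r. infinite (N \<alpha>)" using N Field_r by auto
    show "\<forall>\<alpha> \<beta>. (\<alpha>, \<beta>) \<in> ?r \<longrightarrow> N \<beta> \<subseteq>\<^sup>* N \<alpha>"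
    proof (intro allI impI)
      fix \<alpha> \<beta> assume r: "(\<alpha>, \<beta>) \<in> ?r"
      show "N \<beta> \<subseteq>\<^sup>* N \<alpha>"
      proof (cases "\<alpha> = \<beta>")
        case True
        then show ?thesis by (simp add: almost_subset_refl)
      next
        case False
        then have "\<alpha> \<in> underS |T| \<beta>" "\<beta> \<in> ?U" using r by (auto simp: underS_def)
        then show ?thesis using N by blast
      qed
    qed
    show "\<not> (\<exists>B. infinite B \<and> (\<forall>\<alpha>\<in>Field ?r. B \<subseteq>\<^sup>* N \<alpha>))"
      using no_pseudo_intersection Field_r by simp
  qed
  then obtain f where "inj_on f T" "f ` T \<subseteq> ?U"
    using tn Field_r unfolding has_card_tower_number_def by metis
  then have "|T| \<le>o |?U|" using card_of_ordLeq by blast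
  moreover have "|?U| <o |T|"
    using card_of_underS[OF card_of_Card_order, of a T] \<open>a \<in> T\<close> by (simp add: Field_card_of)
  ultimately show False using not_ordLess_ordLeq by blast
qed

lemma has_card_tower_number_refining_chain:
  assumes tn: "has_card_tower_number T"
    and P: "\<And>a M. a \<in> T \<Longrightarrow> infinite M \<Longrightarrow> \<exists>N\<subseteq>M. infinite N \<and> P a N"
  shows "\<exists>N. \<forall>a\<in>T. infinite (N a) \<and> P a (N a) \<and> (\<forall>b\<in>underS |T| a. N a \<subseteq>\<^sup>* N b)"
proof -
  have wo: "wo_rel |T|" unfolding wo_rel_def by (rule card_of_Well_order)
  define good where "good f a X \<longleftrightarrow> infinite X \<and> P a X \<and> (\<forall>b\<in>underS |T| a. X \<subseteq>\<^sup>* f b)"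
    for f a X
  define H where "H f a = (SOME X. good f a X)" for f a
  have "wo_rel.adm_wo |T| H"
    unfolding wo_rel.adm_wo_def[OF wo] H_def good_def by simp
  then have fixpoint: "wo_rel.worec |T| H = H (wo_rel.worec |T| H)"
    by (rule wo_rel.worec_fixpoint[OF wo])
  define N where "N = wo_rel.worec |T| H"
  have "a \<in> T \<longrightarrow> good N a (N a)" for a
  proof (induction a rule: wo_rel.well_order_induct[OF wo])
    case (1 a)
    show ?case
    proof
      assume "a \<in> T"
      have "\<forall>b\<in>underS |T| a. infinite (N b) \<and> (\<forall>c\<in>underS |T| b. N b \<subseteq>\<^sup>* N c)"
      proof
        fix b assume b: "b \<in> underS |T| a"
        then have "b \<in> T" using Order_Relation.underS_Field[of "|T|" a] by (auto simp: Field_card_of)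
        then show "infinite (N b) \<and> (\<forall>c\<in>underS |T| b. N b \<subseteq>\<^sup>* N c)"
          using 1 b unfolding good_def by (auto simp: underS_def)
      qed
      then obtain M where M: "infinite M" "\<forall>b\<in>underS |T| a. M \<subseteq>\<^sup>* N b"
        using has_card_tower_number_pseudo_intersection[OF tn \<open>a \<in> T\<close>] by blast
      obtain X where "X \<subseteq> M" "infinite X" "P a X"
        using P[OF \<open>a \<in> T\<close> M(1)] by blast
      then have "good N a X"
        using M(2) subset_imp_almost_subset almost_subset_trans unfolding good_def by blast
      moreover have "N a = (SOME X. good N a X)"
        using fixpoint unfolding N_def H_def by metis
      ultimately show "good N a (N a)" by (metis someI)
    qed
  qed
  then show ?thesis unfolding good_def by blast
qed

lemma almost_decreasing_finite_has_least:
  assumes "total_on T r" "\<forall>a\<in>T. \<forall>b\<in>underS r a. N a \<subseteq>\<^sup>* N b"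
    and "finite E" "E \<noteq> {}" "E \<subseteq> T"
  shows "\<exists>m\<in>E. \<forall>b\<in>E. N m \<subseteq>\<^sup>* N b"
  using assms(3-5)
proof (induction E rule: finite_ne_induct)
  case (singleton x)
  then show ?case by (simp add: almost_subset_refl)
next
  case (insert x E)
  then obtain m where m: "m \<in> E" "\<forall>b\<in>E. N m \<subseteq>\<^sup>* N b" by auto
  have "x \<in> T" "m \<in> T" using insert m by auto
  consider "x = m" | "x \<in> underS r m" | "m \<in> underS r x"
    using assms(1) \<open>x \<in> T\<close> \<open>m \<in> T\<close> unfolding total_on_def underS_def by blast
  then show ?case
  proof cases
    case 1
    then show ?thesis using m by (auto simp: almost_subset_refl)
  next
    case 2
    then have "N m \<subseteq>\<^sup>* N x" using assms(2) \<open>m \<in> T\<close> by blast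
    then show ?thesis using m by auto
  next
    case 3
    then have "N x \<subseteq>\<^sup>* N m" using assms(2) \<open>x \<in> T\<close> by blast
    then show ?thesis using m almost_subset_trans by (auto simp: almost_subset_refl)
  qed
qed

lemma almost_decreasing_strong_fip:
  assumes "total_on T r" "\<forall>a\<in>T. \<forall>b\<in>underS r a. N a \<subseteq>\<^sup>* N b" "\<forall>a\<in>T. infinite (N a)"
  shows "strong_fip (N ` T)"
  unfolding strong_fip_def
proof (intro allI impI)
  fix D assume "D \<subseteq> N ` T" "finite D"
  then obtain E where E: "E \<subseteq> T" "finite E" "D = N ` E"
    by (meson finite_subset_image)
  show "infinite (\<Inter>D)"
  proof (cases "E = {}")
    case True
    then show ?thesis using E by simp
  next
    case False
    then obtain m where m: "m \<in> E" "\<forall>b\<in>E. N m \<subseteq>\<^sup>* N b"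
      using almost_decreasing_finite_has_least[OF assms(1,2) E(2) _ E(1)] by blast
    have "N m - \<Inter>D \<subseteq> (\<Union>b\<in>E. N m - N b)" using E(3) by auto
    moreover have "finite (\<Union>b\<in>E. N m - N b)"
      using m E(2) unfolding almost_subset_def by blast
    ultimately have "finite (N m - \<Inter>D)" by (rule finite_subset)
    moreover have "infinite (N m)" using assms(3) m E(1) by auto
    ultimately show ?thesis by (meson Diff_infinite_finite)
  qed
qed

section \<open>Ultrafilter limits\<close>

lemma is_p_limit_singleton_iff:
  "is_p_limit X p (\<lambda>n. {f n}) x \<longleftrightarrow>
     x \<in> topspace X \<and> (\<forall>V. openin X V \<and> x \<in> V \<longrightarrow> {n. f n \<in> V} \<in> p)"
  unfolding is_p_limit_def by simp

lemma is_p_limit_mono: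
  assumes "free_ultrafilter p" "is_p_limit X p B x" "\<And>n. B n \<subseteq> C n"
  shows "is_p_limit X p C x"
  unfolding is_p_limit_def
proof (intro conjI allI impI)
  show "x \<in> topspace X" using assms(2) unfolding is_p_limit_def by blast
  fix V assume "openin X V \<and> x \<in> V"
  then have "{n. V \<inter> B n \<noteq> {}} \<in> p" using assms(2) unfolding is_p_limit_def by blast
  moreover have "{n. V \<inter> B n \<noteq> {}} \<subseteq> {n. V \<inter> C n \<noteq> {}}" using assms(3) by blast
  ultimately show "{n. V \<inter> C n \<noteq> {}} \<in> p" by (rule free_ultrafilter_mono[OF assms(1)])
qed

lemma limitin_imp_is_p_limit:
  assumes p: "free_ultrafilter p" and "N \<in> p"
    and lim: "limitin X f x (inf cofinite (principal N))"
  shows "is_p_limit X p (\<lambda>n. {f n}) x"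
  unfolding is_p_limit_singleton_iff
proof (intro conjI allI impI)
  show "x \<in> topspace X" using lim by (simp add: limitin_def)
  fix V assume "openin X V \<and> x \<in> V"
  then have "finite {n. \<not> (n \<in> N \<longrightarrow> f n \<in> V)}"
    using lim unfolding limitin_def eventually_inf_principal eventually_cofinite by blast
  moreover have "{n. \<not> (n \<in> N \<longrightarrow> f n \<in> V)} = {n\<in>N. f n \<notin> V}" by blast
  ultimately have "finite {n\<in>N. f n \<notin> V}" by simp
  then have "N \<inter> - {n\<in>N. f n \<notin> V} \<in> p"
    using \<open>N \<in> p\<close> free_ultrafilter_Compl_finite[OF p] free_ultrafilter_Int[OF p] by blast
  then show "{n. f n \<in> V} \<in> p" by (rule free_ultrafilter_mono[OF p]) blast
qed

text \<open>Only the finitely many coordinates restricted by a basic open box have to be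
  controlled, and finitely many members of p still intersect in p.\<close>
lemma is_p_limit_product_topology:
  assumes p: "free_ultrafilter p"
    and f: "\<And>n. f n \<in> topspace (product_topology X I)"
    and lim: "\<And>i. i \<in> I \<Longrightarrow> is_p_limit (X i) p (\<lambda>n. {f n i}) (x i)"
  shows "is_p_limit (product_topology X I) p (\<lambda>n. {f n}) (restrict x I)"
  unfolding is_p_limit_singleton_iff
proof (intro conjI allI impI)
  show "restrict x I \<in> topspace (product_topology X I)"
    using lim unfolding is_p_limit_def by (simp add: topspace_product_topology)
  fix U assume "openin (product_topology X I) U \<and> restrict x I \<in> U"
  then obtain W where W: "finite {i \<in> I. W i \<noteq> topspace (X i)}" "\<forall>i\<in>I. openin (X i) (W i)"
    "restrict x I \<in> PiE I W" "PiE I W \<subseteq> U"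
    unfolding openin_product_topology_alt by blast
  define J where "J = {i \<in> I. W i \<noteq> topspace (X i)}"
  have "(\<Inter>j\<in>J. {n. f n j \<in> W j}) \<in> p"
  proof (rule free_ultrafilter_INT[OF p])
    show "finite J" using W(1) unfolding J_def .
    fix j assume "j \<in> J"
    then have "j \<in> I" "x j \<in> W j" using W(3) unfolding J_def by auto
    then show "{n. f n j \<in> W j} \<in> p"
      using lim W(2) unfolding is_p_limit_singleton_iff by blast
  qed
  moreover have "(\<Inter>j\<in>J. {n. f n j \<in> W j}) \<subseteq> {n. f n \<in> U}"
  proof
    fix n assume n: "n \<in> (\<Inter>j\<in>J. {n. f n j \<in> W j})"
    have "f n i \<in> W i" if "i \<in> I" for i
      using n f[of n] that unfolding J_def by (cases "i \<in> J") (auto simp: topspace_product_topology)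
    then have "f n \<in> PiE I W" using f[of n] by (auto simp: topspace_product_topology PiE_def)
    then show "n \<in> {n. f n \<in> U}" using W(4) by blast
  qed
  ultimately show "{n. f n \<in> U} \<in> p" by (rule free_ultrafilter_mono[OF p])
qed

lemma is_p_limit_in_derived_set:
  assumes p: "free_ultrafilter p" and "inj f" and lim: "is_p_limit X p (\<lambda>n. {f n}) x"
  shows "x \<in> X derived_set_of (range f)"
  unfolding derived_set_of_def
proof (intro CollectI conjI allI impI)
  show "x \<in> topspace X" using lim unfolding is_p_limit_def by blast
  fix U assume "x \<in> U \<and> openin X U"
  then have "infinite {n. f n \<in> U}"
    using lim free_ultrafilter_infinite[OF p] unfolding is_p_limit_singleton_iff by blast
  moreover have "finite (f -` {x})" using \<open>inj f\<close> by (simp add: finite_vimageI)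
  ultimately have "{n. f n \<in> U} - f -` {x} \<noteq> {}"
    using Diff_infinite_finite by (metis finite.emptyI)
  then obtain n where "f n \<in> U" "f n \<noteq> x" by blast
  then show "\<exists>y. y \<noteq> x \<and> y \<in> range f \<and> y \<in> U" by blast
qed

lemma mad_family_tower_ultrafilter_limits:
  assumes mad: "mad_family \<A>" and tn: "has_card_tower_number T"
  obtains p where "free_ultrafilter p"
    "\<And>a. a \<in> T \<Longrightarrow> \<exists>x. is_p_limit (Psi_space \<A>) p (\<lambda>n. {Inl (h a n)}) x"
proof -
  obtain N where N: "\<forall>a\<in>T. infinite (N a) \<and>
      (\<exists>x. limitin (Psi_space \<A>) (Inl \<circ> h a) x (inf cofinite (principal (N a)))) \<and>
      (\<forall>b\<in>underS |T| a. N a \<subseteq>\<^sup>* N b)"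
    using has_card_tower_number_refining_chain[OF tn,
        where P = "\<lambda>a N. \<exists>x. limitin (Psi_space \<A>) (Inl \<circ> h a) x (inf cofinite (principal N))"]
      mad_family_convergent_subsequence[OF mad]
    by blast
  have "total_on T |T|"
    using card_of_Well_order[of T] by (simp add: order_on_defs Field_card_of)
  then have "strong_fip (N ` T)"
    using almost_decreasing_strong_fip N by blast
  then obtain p where p: "free_ultrafilter p" "N ` T \<subseteq> p"
    using strong_fip_free_ultrafilter by blast
  show ?thesis
  proof (rule that[OF p(1)])
    fix a assume "a \<in> T"
    then obtain x where "limitin (Psi_space \<A>) (Inl \<circ> h a) x (inf cofinite (principal (N a)))"
      using N by blast
    moreover have "N a \<in> p" using p(2) \<open>a \<in> T\<close> by blast
    ultimately show "\<exists>x. is_p_limit (Psi_space \<A>) p (\<lambda>n. {Inl (h a n)}) x"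
      using limitin_imp_is_p_limit[OF p(1)] by fastforce
  qed
qed

lemma mad_family_rel_countably_compact_power:
  fixes T :: "'i set"
  assumes mad: "mad_family \<A>" and tn: "has_card_tower_number T"
  shows "rel_countably_compact (product_topology (\<lambda>_. Psi_space \<A>) T) (PiE T (\<lambda>_. range Inl))"
  unfolding rel_countably_compact_def
proof (intro conjI allI impI)
  let ?Z = "product_topology (\<lambda>_. Psi_space \<A>) T"
  show Y: "PiE T (\<lambda>_. range Inl) \<subseteq> topspace ?Z"
    by (auto simp: topspace_product_topology topspace_Psi_space)
  fix S :: "('i \<Rightarrow> nat + nat set) set"
  assume S: "S \<subseteq> PiE T (\<lambda>_. range Inl) \<and> countable S \<and> infinite S"
  then obtain s where s: "bij_betw s (UNIV :: nat set) S" using countable_infiniteE' by blast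
  then have s_in: "s n \<in> PiE T (\<lambda>_. range Inl)" for n using S bij_betwE by blast
  obtain p where p: "free_ultrafilter p"
    and "\<And>a. a \<in> T \<Longrightarrow> \<exists>x. is_p_limit (Psi_space \<A>) p (\<lambda>n. {Inl (projl (s n a))}) x"
    using mad_family_tower_ultrafilter_limits[OF mad tn, of "\<lambda>a n. projl (s n a)"] by blast
  moreover have "Inl (projl (s n a)) = s n a" if "a \<in> T" for a n
    using PiE_mem[OF s_in[of n] that] by auto
  ultimately have "\<forall>a\<in>T. \<exists>x. is_p_limit (Psi_space \<A>) p (\<lambda>n. {s n a}) x"
    by simp
  then have "\<exists>x. \<forall>a\<in>T. is_p_limit (Psi_space \<A>) p (\<lambda>n. {s n a}) (x a)"
    by (rule bchoice)
  then obtain x where x: "\<forall>a\<in>T. is_p_limit (Psi_space \<A>) p (\<lambda>n. {s n a}) (x a)" ..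
  have "is_p_limit ?Z p (\<lambda>n. {s n}) (restrict x T)"
  proof (rule is_p_limit_product_topology[OF p])
    show "s n \<in> topspace ?Z" for n using s_in Y by blast
    show "is_p_limit (Psi_space \<A>) p (\<lambda>n. {s n a}) (x a)" if "a \<in> T" for a
      using x that by blast
  qed
  moreover have "inj s" "range s = S" using s by (auto simp: bij_betw_def)
  ultimately have "restrict x T \<in> ?Z derived_set_of S"
    using is_p_limit_in_derived_set[OF p] by metis
  then show "?Z derived_set_of S \<noteq> {}" by blast
qed

lemma mad_family_kappa_omega_star_pseudocompact:
  fixes T :: "'i set"
  assumes mad: "mad_family \<A>" and tn: "has_card_tower_number T"
  shows "kappa_omega_star_pseudocompact T (Psi_space \<A>)"
  unfolding kappa_omega_star_pseudocompact_def
proof (intro allI impI)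
  fix V :: "'i \<Rightarrow> nat \<Rightarrow> (nat + nat set) set"
  assume V: "\<forall>\<alpha>\<in>T. \<forall>n. openin (Psi_space \<A>) (V \<alpha> n) \<and> V \<alpha> n \<noteq> {}"
  define h where "h a n = (SOME k. Inl k \<in> V a n)" for a n
  have h: "Inl (h a n) \<in> V a n" if "a \<in> T" for a n
  proof -
    have "openin (Psi_space \<A>) (V a n)" "V a n \<noteq> {}" using V that by auto
    then have "\<exists>k. Inl k \<in> V a n"
      by (rule openin_Psi_space_meets_Inl[OF mad_family_infinite[OF mad]])
    then show ?thesis unfolding h_def by (rule someI_ex)
  qed
  obtain p where p: "free_ultrafilter p"
    and lim: "\<And>a. a \<in> T \<Longrightarrow> \<exists>x. is_p_limit (Psi_space \<A>) p (\<lambda>n. {Inl (h a n)}) x"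
    using mad_family_tower_ultrafilter_limits[OF mad tn, of h] by blast
  have "\<exists>x. is_p_limit (Psi_space \<A>) p (V a) x" if a: "a \<in> T" for a
  proof -
    obtain x where "is_p_limit (Psi_space \<A>) p (\<lambda>n. {Inl (h a n)}) x" using lim[OF a] by blast
    then have "is_p_limit (Psi_space \<A>) p (V a) x"
      by (rule is_p_limit_mono[OF p]) (simp add: h[OF a])
    then show ?thesis ..
  qed
  with p show "\<exists>p. free_ultrafilter p \<and> (\<forall>\<alpha>\<in>T. \<exists>x. is_p_limit (Psi_space \<A>) p (V \<alpha>) x)"
    by blast
qed

theorem lemma3p7:
  fixes \<A> :: "nat set set" and T :: "'i set"
  assumes "mad_family \<A>"
    and "has_card_tower_number T"
  shows "rel_countably_compact (product_topology (\<lambda>_. Psi_space \<A>) T)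
           (PiE T (\<lambda>_. range Inl))
         \<and> kappa_omega_star_pseudocompact T (Psi_space \<A>)"
  using mad_family_rel_countably_compact_power[OF assms]
    mad_family_kappa_omega_star_pseudocompact[OF assms] by blast

end
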